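(* Let $X$ be a Polish space and let $\rho:\mathcal{F}\to[\Psi]^\omega$ be a partition regular function. If $\mathcal{F}$ is an analytic subset of $[\Omega]^\omega$ and $\rho$ is a Borel function, then $\mathscr{L}_X(\rho)\subseteq\Sigma^1_1(X)$, i.e., every set in $\mathscr{L}_X(\rho)$ is an analytic subset of $X$.
   Context: Let $\Omega,\Psi$ be countably infinite sets and $\mathcal{F}\subseteq[\Omega]^\omega$ a nonempty family of infinite subsets of $\Omega$ with $A\setminus K\in\mathcal{F}$ for all $A\in\mathcal{F}$ and finite $K\subseteq\Omega$. A function $\rho:\mathcal{F}\to[\Psi]^\omega$ is partition regular if: (M) $E\subseteq F$ in $\mathcal{F}$ implies $\rho(E)\subseteq\rho(F)$; (R) for every $F\in\mathcal{F}$ and $A,B\subseteq\Psi$ with $\rho(F)=A\cup B$ there is $E\in\mathcal{F}$ with $\rho(E)\subseteq A$ or $\rho(E)\subseteq B$; (S) for every $F\in\mathcal{F}$ there is $E\subseteq F$, $E\in\mathcal{F}$, such that for every $a\in\rho(E)$ there is a finite $K\subseteq\Omega$ with $a\notin\rho(E\setminus K)$. Subsets of $\Omega$ are identified with their characteristic functions, so $2^\Omega=\{0,1\}^\Omega$ carries the product topology (discrete on $\{0,1\}$), and $[\Omega]^\omega$ (infinite subsets) is a $G_\delta$ subspace, hence Polish; likewise for $[\Psi]^\omega\subseteq2^\Psi$. For $x:\Psi\to X$, $\Lambda_x(\rho)$ is the set of $\eta\in X$ for which there is $F\in\mathcal{F}$ such that for every neighborhood $U$ of $\eta$ there is a finite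 $K\subseteq\Omega$ with $x_s\in U$ for all $s\in\rho(F\setminus K)$. $\mathscr{L}_X(\rho)=\{A\subseteq X:\exists x\in X^\Psi\ A=\Lambda_x(\rho)\}\cup\{\emptyset\}$, and $\Sigma^1_1(X)$ is the family of analytic subsets of $X$. *)

theory Defs
  imports "HOL-Analysis.Analysis"
begin

text \<open>The Cantor-cube topology on the powerset of a type: subsets are identified with
  their characteristic functions, and the product topology of the discrete space {0,1}
  is generated by the subbasic clopen sets {A. a in A} and {A. a notin A}.\<close>
definition cantor_top :: "'a set topology" where
  "cantor_top = topology_generated_by
     ({{A. a \<in> A} | a. True} \<union> {{A. a \<notin> A} | a. True})"

definition infsets_top :: "'a set topology" where
  "infsets_top = subtopology cantor_top {A. infinite A}"

definition borel_on :: "'a topology \<Rightarrow> 'a measure" where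
  "borel_on T = sigma (topspace T) {U. openin T U}"

definition analytic_in :: "'a topology \<Rightarrow> 'a set \<Rightarrow> bool" where
  "analytic_in T A \<longleftrightarrow> A \<subseteq> topspace T \<and>
     (A = {} \<or> (\<exists>f :: (nat \<Rightarrow> nat) \<Rightarrow> 'a. continuous_map euclidean T f \<and> range f = A))"

definition partition_regular :: "'o set set \<Rightarrow> ('o set \<Rightarrow> 'p set) \<Rightarrow> bool" where
  "partition_regular \<F> \<rho> \<longleftrightarrow>
     (\<forall>E\<in>\<F>. \<forall>F\<in>\<F>. E \<subseteq> F \<longrightarrow> \<rho> E \<subseteq> \<rho> F) \<and>
     (\<forall>F\<in>\<F>. \<forall>A B. \<rho> F = A \<union> B \<longrightarrow> (\<exists>E\<in>\<F>. \<rho> E \<subseteq> A \<or> \<rho> E \<subseteq> B)) \<and>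
     (\<forall>F\<in>\<F>. \<exists>E\<in>\<F>. E \<subseteq> F \<and>
        (\<forall>a\<in>\<rho> E. \<exists>K. finite K \<and> a \<notin> \<rho> (E - K)))"

definition Lambda_lim :: "'o set set \<Rightarrow> ('o set \<Rightarrow> 'p set) \<Rightarrow> ('p \<Rightarrow> 'x::topological_space) \<Rightarrow> 'x set" where
  "Lambda_lim \<F> \<rho> x = {\<eta>. \<exists>F\<in>\<F>. \<forall>U. open U \<and> \<eta> \<in> U \<longrightarrow>
       (\<exists>K. finite K \<and> (\<forall>s\<in>\<rho> (F - K). x s \<in> U))}"

definition L_fam :: "'o set set \<Rightarrow> ('o set \<Rightarrow> 'p set) \<Rightarrow> 'x::topological_space set set" where
  "L_fam \<F> \<rho> = {A. \<exists>x :: 'p \<Rightarrow> 'x. A = Lambda_lim \<F> \<rho> x} \<union> {{}}"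

end

theory Submission
  imports Defs
begin

(* A point eta lies in Lambda_x(rho) iff some F in the family has, for every basic open set b
   containing eta, a finite K with rho(F - K) contained in the preimage of b under x.
   Parametrising the family continuously by the Baire space, this exhibits Lambda_x(rho) as the
   projection of a Borel subset of X \<times> (nat \<Rightarrow> nat): the parameter sets {z. rho(f z - K) \<subseteq> V}
   are Borel because A \<mapsto> A - K is continuous on the Cantor cube, rho is Borel, and inclusion
   in V is a closed condition. Borel subsets of Polish spaces are analytic, and analytic sets
   are closed under continuous images. *)

section \<open>The Baire space\<close>

(* The library gives nat no metric. The discrete one induces its (discrete) topology, and makes
   the Baire space nat \<Rightarrow> nat a polish_space through the instance for countable products. *)
instantiation nat :: metric_space
begin

definition dist_nat :: "nat \<Rightarrow> nat \<Rightarrow> real" where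
  "dist_nat m n = (if m = n then 0 else 1)"

definition uniformity_nat :: "(nat \<times> nat) filter" where
  "uniformity_nat = (INF e\<in>{0 <..}. principal {(x, y). dist x y < e})"

instance
proof
  fix U :: "nat set"
  show "open U \<longleftrightarrow> (\<forall>x\<in>U. eventually (\<lambda>(x', y). x' = x \<longrightarrow> y \<in> U) uniformity)"
  proof
    assume "open U"
    show "\<forall>x\<in>U. eventually (\<lambda>(x', y). x' = x \<longrightarrow> y \<in> U) uniformity"
    proof
      fix x assume "x \<in> U"
      then have "eventually (\<lambda>(x', y). x' = x \<longrightarrow> y \<in> U) (principal {(x, y). dist x y < (1::real)})"
        by (auto simp: eventually_principal dist_nat_def split: if_splits)
      then show "eventually (\<lambda>(x', y). x' = x \<longrightarrow> y \<in> U) uniformity"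
        unfolding uniformity_nat_def by (intro eventually_INF1[of 1]) auto
    qed
  qed (simp add: open_discrete)
qed (auto simp: dist_nat_def uniformity_nat_def)

end

instance nat :: polish_space
proof
  fix X :: "nat \<Rightarrow> nat" assume "Cauchy X"
  then obtain N where "\<forall>m\<ge>N. \<forall>n\<ge>N. dist (X m) (X n) < 1"
    using metric_CauchyD[of X 1] by auto
  then have "\<forall>\<^sub>F n in sequentially. X n = X N"
    unfolding eventually_sequentially by (auto simp: dist_nat_def split: if_splits)
  then show "convergent X"
    unfolding convergent_def using tendsto_eventually by blast
qed

instance prod :: (polish_space, polish_space) polish_space ..

lemma open_cylinder: "open {w :: nat \<Rightarrow> 'a::discrete_topology. w i = k}"
proof -
  have "{w :: nat \<Rightarrow> 'a. w i = k} = (\<lambda>w. w i) -` {k}" by auto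
  then show ?thesis
    by (simp only:) (intro open_vimage continuous_on_product_coordinates, simp add: open_discrete)
qed

section \<open>Sequences with geometrically small steps\<close>

lemma dist_le_of_geometric_steps:
  fixes s :: "nat \<Rightarrow> 'a::metric_space"
  assumes steps: "\<And>n. dist (s n) (s (Suc n)) \<le> (1/2)^n" and "m \<le> n"
  shows "dist (s m) (s n) \<le> 2 * (1/2)^m"
proof -
  have "dist (s m) (s (m + k)) \<le> 2 * (1/2)^m - 2 * (1/2)^(m + k)" for k
  proof (induction k)
    case (Suc k)
    have "dist (s m) (s (m + Suc k)) \<le> dist (s m) (s (m + k)) + dist (s (m + k)) (s (Suc (m + k)))"
      by (simp add: dist_triangle)
    also have "\<dots> \<le> 2 * (1/2)^m - 2 * (1/2)^(m + Suc k)"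
      using Suc steps[of "m + k"] by simp
    finally show ?case .
  qed simp
  from this[of "n - m"] \<open>m \<le> n\<close> have "dist (s m) (s n) \<le> 2 * (1/2)^m - 2 * (1/2)^n"
    by simp
  then show ?thesis
    using zero_le_power[of "1/2::real" n] by linarith
qed

lemma Cauchy_of_geometric_steps:
  fixes s :: "nat \<Rightarrow> 'a::metric_space"
  assumes "\<And>n. dist (s n) (s (Suc n)) \<le> (1/2)^n"
  shows "Cauchy s"
proof (rule metric_CauchyI)
  fix e :: real assume "0 < e"
  then obtain M where M: "(1/2::real)^M < e/2"
    using real_arch_pow_inv[of "e/2" "1/2::real"] by auto
  have "dist (s m) (s n) < e" if "M \<le> m" "M \<le> n" for m n
  proof -
    have "dist (s m) (s n) \<le> 2 * (1/2)^min m n"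
      using dist_le_of_geometric_steps[OF assms, of m n] dist_le_of_geometric_steps[OF assms, of n m]
      by (cases "m \<le> n") (auto simp: dist_commute min_def)
    also have "\<dots> \<le> 2 * (1/2)^M"
      using that by (simp add: power_decreasing)
    finally show ?thesis using M by linarith
  qed
  then show "\<exists>M. \<forall>m\<ge>M. \<forall>n\<ge>M. dist (s m) (s n) < e" by blast
qed

lemma dist_limit_le_of_geometric_steps:
  fixes s :: "nat \<Rightarrow> 'a::metric_space"
  assumes "\<And>n. dist (s n) (s (Suc n)) \<le> (1/2)^n" and "s \<longlonglongrightarrow> l"
  shows "dist (s m) l \<le> 2 * (1/2)^m"
proof (rule tendsto_upperbound)
  show "((\<lambda>n. dist (s m) (s n)) \<longlongrightarrow> dist (s m) l) sequentially"
    by (intro tendsto_intros assms(2))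
  show "\<forall>\<^sub>F n in sequentially. dist (s m) (s n) \<le> 2 * (1/2)^m"
    using dist_le_of_geometric_steps[OF assms(1)] eventually_sequentially by blast
qed simp

section \<open>Closed subsets of Polish spaces are images of the Baire space\<close>

text \<open>At step n+1 the parameter z proposes the point d (z (n+1)), which is accepted only if it
  lies within (1/2)^n of the current point. Hence the sequence converges for every z, its n-th
  term depends only on z 0, ..., z n, and every point of the closure of the range of d arises
  from a parameter whose proposals are all accepted.\<close>

fun greedy_seq :: "(nat \<Rightarrow> 'a::metric_space) \<Rightarrow> (nat \<Rightarrow> nat) \<Rightarrow> nat \<Rightarrow> 'a" where
  "greedy_seq d z 0 = d (z 0)"
| "greedy_seq d z (Suc n) =
     (if dist (d (z (Suc n))) (greedy_seq d z n) < (1/2)^n then d (z (Suc n)) else greedy_seq d z n)"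

definition greedy_lim :: "(nat \<Rightarrow> 'a::metric_space) \<Rightarrow> (nat \<Rightarrow> nat) \<Rightarrow> 'a" where
  "greedy_lim d z = lim (greedy_seq d z)"

lemma greedy_seq_steps: "dist (greedy_seq d z n) (greedy_seq d z (Suc n)) \<le> (1/2)^n"
  by (simp add: dist_commute)

lemma greedy_seq_in_range: "greedy_seq d z n \<in> range d"
  by (induction n) auto

lemma greedy_seq_cong: "(\<And>i. i \<le> n \<Longrightarrow> z i = w i) \<Longrightarrow> greedy_seq d z n = greedy_seq d w n"
  by (induction n) auto

lemma greedy_seq_LIMSEQ:
  fixes d :: "nat \<Rightarrow> 'a::complete_space"
  shows "greedy_seq d z \<longlonglongrightarrow> greedy_lim d z"
  unfolding greedy_lim_def
  using Cauchy_of_geometric_steps[of "greedy_seq d z", OF greedy_seq_steps]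
  by (simp add: Cauchy_convergent_iff convergent_LIMSEQ_iff)

lemma dist_greedy_seq_lim:
  fixes d :: "nat \<Rightarrow> 'a::complete_space"
  shows "dist (greedy_seq d z n) (greedy_lim d z) \<le> 2 * (1/2)^n"
  by (rule dist_limit_le_of_geometric_steps[of "greedy_seq d z", OF greedy_seq_steps greedy_seq_LIMSEQ])

lemma continuous_on_greedy_lim:
  fixes d :: "nat \<Rightarrow> 'a::complete_space"
  shows "continuous_on UNIV (greedy_lim d)"
  unfolding continuous_on_topological
proof (intro ballI allI impI)
  fix z B assume "open B" "greedy_lim d z \<in> B"
  then obtain e where "e > 0" and e: "\<And>y. dist y (greedy_lim d z) < e \<Longrightarrow> y \<in> B"
    using open_dist by metis
  obtain n where n: "(1/2::real)^n < e/4"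
    using real_arch_pow_inv[of "e/4" "1/2::real"] \<open>e > 0\<close> by auto
  define A where "A = (\<Inter>i\<le>n. {w :: nat \<Rightarrow> nat. w i = z i})"
  have "open A"
    unfolding A_def by (intro open_INT finite_atMost ballI open_cylinder)
  moreover have "greedy_lim d w \<in> B" if "w \<in> A" for w
  proof -
    have "greedy_seq d w n = greedy_seq d z n"
      using that by (intro greedy_seq_cong) (auto simp: A_def)
    then have "dist (greedy_lim d w) (greedy_lim d z)
        \<le> dist (greedy_seq d w n) (greedy_lim d w) + dist (greedy_seq d z n) (greedy_lim d z)"
      by (metis dist_commute dist_triangle)
    also have "\<dots> < e"
      using dist_greedy_seq_lim[of d w n] dist_greedy_seq_lim[of d z n] n by simp
    finally show ?thesis by (rule e)
  qed
  ultimately show "\<exists>A. open A \<and> z \<in> A \<and> (\<forall>y\<in>UNIV. y \<in> A \<longrightarrow> greedy_lim d y \<in> B)"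
    by (auto simp: A_def)
qed

lemma range_greedy_lim:
  fixes d :: "nat \<Rightarrow> 'a::complete_space"
  shows "range (greedy_lim d) = closure (range d)"
proof (intro antisym subsetI)
  fix y assume "y \<in> range (greedy_lim d)"
  then obtain z where "y = greedy_lim d z" by blast
  then show "y \<in> closure (range d)"
    unfolding closure_sequential using greedy_seq_in_range greedy_seq_LIMSEQ by blast
next
  fix y assume y: "y \<in> closure (range d)"
  have "\<exists>k. dist (d k) y < (1/2)^n / 4" for n
  proof -
    have "(0::real) < (1/2)^n / 4" by simp
    with y show ?thesis unfolding closure_approachable by blast
  qed
  then obtain k where k: "\<And>n. dist (d (k n)) y < (1/2)^n / 4"
    by metis
  have accepted: "greedy_seq d k n = d (k n)" for n
  proof (induction n)
    case (Suc n)
    have "dist (d (k (Suc n))) (d (k n)) \<le> dist (d (k (Suc n))) y + dist (d (k n)) y"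
      by (rule dist_triangle2)
    also have "\<dots> < (1/2)^n"
      using k[of "Suc n"] k[of n] zero_le_dist[of "d (k n)" y] unfolding power_Suc by linarith
    finally show ?case
      using Suc by simp
  qed simp
  have "(\<lambda>n. dist (d (k n)) y) \<longlonglongrightarrow> 0"
  proof (rule tendsto_sandwich[of "\<lambda>_. 0" _ _ "\<lambda>n. (1/2)^n / 4"])
    show "(\<lambda>n. (1/2::real)^n / 4) \<longlonglongrightarrow> 0"
      by (intro tendsto_divide_zero LIMSEQ_power_zero) simp
    show "\<forall>\<^sub>F n in sequentially. dist (d (k n)) y \<le> (1/2)^n / 4"
      using k by (intro always_eventually allI less_imp_le)
  qed simp_all
  then have "(\<lambda>n. d (k n)) \<longlonglongrightarrow> y"
    by (rule tendsto_dist_iff[THEN iffD2])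
  moreover have "greedy_seq d k = (\<lambda>n. d (k n))"
    using accepted by blast
  ultimately have "greedy_seq d k \<longlonglongrightarrow> y"
    by simp
  then have "greedy_lim d k = y"
    by (rule LIMSEQ_unique[OF greedy_seq_LIMSEQ])
  then show "y \<in> range (greedy_lim d)" by blast
qed

lemma countable_dense_subsetE:
  fixes C :: "'a::second_countable_topology set"
  obtains D where "countable D" "D \<subseteq> C" "C \<subseteq> closure D"
proof -
  obtain \<B> :: "'a set set" where "countable \<B>" and \<B>: "topological_basis \<B>"
    using ex_countable_basis by blast
  define pick where "pick b = (SOME y. y \<in> b \<inter> C)" for b
  have pick: "pick b \<in> b \<inter> C" if "b \<inter> C \<noteq> {}" for b
    unfolding pick_def using that by (metis ex_in_conv someI)
  define D where "D = pick ` {b \<in> \<B>. b \<inter> C \<noteq> {}}"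
  have "countable D"
    unfolding D_def using \<open>countable \<B>\<close> by simp
  moreover have "D \<subseteq> C"
    unfolding D_def using pick by blast
  moreover have "y \<in> closure D" if "y \<in> C" for y
    unfolding closure_iff_nhds_not_empty
  proof (intro allI impI)
    fix U V assume "V \<subseteq> U" "open V" "y \<in> V"
    then obtain b where "b \<in> \<B>" "y \<in> b" "b \<subseteq> V"
      using topological_basisE[OF \<B>] by metis
    then show "D \<inter> U \<noteq> {}"
      using pick[of b] \<open>y \<in> C\<close> \<open>V \<subseteq> U\<close> unfolding D_def by blast
  qed
  ultimately show thesis
    using that by blast
qed

section \<open>Analytic sets\<close>

lemma analytic_in_euclidean_iff:
  "analytic_in euclidean A \<longleftrightarrow>
     A = {} \<or> (\<exists>f :: (nat \<Rightarrow> nat) \<Rightarrow> 'a::topological_space. continuous_on UNIV f \<and> range f = A)"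
  by (simp add: analytic_in_def)

lemma analytic_in_continuous_map_image:
  assumes "analytic_in X A" and "continuous_map X Y g"
  shows "analytic_in Y (g ` A)"
  using assms continuous_map_compose[of euclidean X _ Y g] continuous_map_image_subset_topspace
  unfolding analytic_in_def by (fastforce simp: image_comp[symmetric])

lemma analytic_closed:
  fixes C :: "'a::polish_space set"
  assumes "closed C"
  shows "analytic_in euclidean C"
proof (cases "C = {}")
  case False
  obtain D where "countable D" "D \<subseteq> C" "C \<subseteq> closure D"
    using countable_dense_subsetE by blast
  with False have "D \<noteq> {}"
    by auto
  have "closure D = C"
    using \<open>D \<subseteq> C\<close> \<open>C \<subseteq> closure D\<close> \<open>closed C\<close> closure_minimal by blast
  then have "range (greedy_lim (from_nat_into D)) = C"
    using range_greedy_lim range_from_nat_into[OF \<open>D \<noteq> {}\<close> \<open>countable D\<close>] by metis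
  then show ?thesis
    unfolding analytic_in_euclidean_iff using continuous_on_greedy_lim by blast
qed (simp add: analytic_in_euclidean_iff)

lemma continuous_on_case_first_coordinate:
  fixes f :: "nat \<Rightarrow> (nat \<Rightarrow> nat) \<Rightarrow> 'a::topological_space"
  assumes "\<And>n. continuous_on UNIV (f n)"
  shows "continuous_on UNIV (\<lambda>w. f (w 0) (\<lambda>i. w (Suc i)))"
proof -
  have shift: "continuous_on UNIV (\<lambda>w :: nat \<Rightarrow> nat. \<lambda>i. w (Suc i))"
    by (intro continuous_on_coordinatewise_then_product continuous_on_product_coordinates)
  have "continuous_on (\<Union>k. {w. w 0 = k}) (\<lambda>w. f (w 0) (\<lambda>i. w (Suc i)))"
  proof (rule continuous_on_open_UN)
    fix k
    have "continuous_on UNIV (\<lambda>w. f k (\<lambda>i. w (Suc i)))"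
      using continuous_on_compose2[OF assms shift] by simp
    then show "continuous_on {w. w 0 = k} (\<lambda>w. f (w 0) (\<lambda>i. w (Suc i)))"
      by (rule continuous_on_eq[OF continuous_on_subset]) auto
  qed (rule open_cylinder)
  moreover have "(\<Union>k. {w :: nat \<Rightarrow> nat. w 0 = k}) = UNIV"
    by blast
  ultimately show ?thesis
    by simp
qed

lemma analytic_UN:
  fixes A :: "nat \<Rightarrow> 'a::topological_space set"
  assumes "\<And>n. analytic_in euclidean (A n)"
  shows "analytic_in euclidean (\<Union>n. A n)"
proof (cases "\<forall>n. A n = {}")
  case False
  then obtain n\<^sub>0 where "A n\<^sub>0 \<noteq> {}" by blast
  \<comment> \<open>an empty member of the family is covered by a parametrisation of a nonempty one\<close>
  have "\<exists>f :: (nat \<Rightarrow> nat) \<Rightarrow> 'a.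
      continuous_on UNIV f \<and> A n \<subseteq> range f \<and> range f \<subseteq> (\<Union>n. A n)" for n
    using assms[of n] assms[of n\<^sub>0] \<open>A n\<^sub>0 \<noteq> {}\<close> unfolding analytic_in_euclidean_iff
    by (cases "A n = {}") blast+
  then obtain f :: "nat \<Rightarrow> (nat \<Rightarrow> nat) \<Rightarrow> 'a"
    where f: "\<And>n. continuous_on UNIV (f n)"
      "\<And>n. A n \<subseteq> range (f n)" "\<And>n. range (f n) \<subseteq> (\<Union>n. A n)"
    by metis
  define F where "F w = f (w 0) (\<lambda>i. w (Suc i))" for w :: "nat \<Rightarrow> nat"
  have "continuous_on UNIV F"
    unfolding F_def by (rule continuous_on_case_first_coordinate[OF f(1)])
  moreover have "range F = (\<Union>n. A n)"
  proof (intro antisym subsetI)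
    fix a assume "a \<in> (\<Union>n. A n)"
    then obtain n v where "a = f n v"
      using f(2) by blast
    then have "F (case_nat n v) = a"
      by (simp add: F_def)
    then show "a \<in> range F" by blast
  qed (use f(3) in \<open>force simp: F_def\<close>)
  ultimately show ?thesis
    unfolding analytic_in_euclidean_iff by blast
qed (simp add: analytic_in_euclidean_iff)

lemma closed_equalizer:
  fixes f :: "nat \<Rightarrow> 'b::topological_space \<Rightarrow> 'a::t2_space"
  assumes "\<And>n. continuous_on UNIV (f n)"
  shows "closed {w. \<forall>n. f n (w n) = f 0 (w 0)}"
proof -
  have "continuous_on UNIV (\<lambda>w. f n (w n))" for n
    using continuous_on_compose2[OF assms continuous_on_product_coordinates] by simp
  then show ?thesis
    unfolding Collect_all_eq by (intro closed_INT ballI closed_Collect_eq)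
qed

lemma image_equalizer_eq_INT_range:
  "(\<lambda>w. f 0 (w 0)) ` {w. \<forall>n. f n (w n) = f 0 (w 0)} = (\<Inter>n. range (f n))"
proof (intro antisym subsetI)
  fix b assume "b \<in> (\<lambda>w. f 0 (w 0)) ` {w. \<forall>n. f n (w n) = f 0 (w 0)}"
  then obtain w where "\<forall>n. f n (w n) = b"
    by auto
  then show "b \<in> (\<Inter>n. range (f n))"
    by (metis INT_I rangeI)
next
  fix b assume "b \<in> (\<Inter>n. range (f n))"
  then have "\<forall>n. \<exists>v. f n v = b"
    by (simp add: image_iff eq_commute)
  then obtain w where "\<forall>n. f n (w n) = b"
    by (rule choice[THEN exE])
  then show "b \<in> (\<lambda>w. f 0 (w 0)) ` {w. \<forall>n. f n (w n) = f 0 (w 0)}"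
    by (intro image_eqI[of _ _ w]) simp_all
qed

lemma analytic_INT:
  fixes A :: "nat \<Rightarrow> 'a::t2_space set"
  assumes "\<And>n. analytic_in euclidean (A n)"
  shows "analytic_in euclidean (\<Inter>n. A n)"
proof (cases "(\<Inter>n. A n) = {}")
  case False
  then have "\<forall>n. \<exists>g :: (nat \<Rightarrow> nat) \<Rightarrow> 'a. continuous_on UNIV g \<and> range g = A n"
    using assms unfolding analytic_in_euclidean_iff by blast
  then obtain f :: "nat \<Rightarrow> (nat \<Rightarrow> nat) \<Rightarrow> 'a"
    where f: "\<And>n. continuous_on UNIV (f n)" "\<And>n. range (f n) = A n"
    by (auto dest!: choice)
  have "analytic_in euclidean {w. \<forall>n. f n (w n) = f 0 (w 0)}"
    by (intro analytic_closed closed_equalizer f(1))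
  moreover have "continuous_map euclidean euclidean (\<lambda>w. f 0 (w 0))"
    using continuous_on_compose2[OF f(1) continuous_on_product_coordinates] by simp
  ultimately have "analytic_in euclidean ((\<lambda>w. f 0 (w 0)) ` {w. \<forall>n. f n (w n) = f 0 (w 0)})"
    by (rule analytic_in_continuous_map_image)
  then show ?thesis
    by (simp add: image_equalizer_eq_INT_range f(2))
qed (simp add: analytic_in_euclidean_iff)

lemma analytic_open:
  fixes U :: "'a::polish_space set"
  assumes "open U"
  shows "analytic_in euclidean U"
proof (cases "U = UNIV")
  case False
  define G where "G n = {y. 1 / Suc n \<le> infdist y (- U)}" for n :: nat
  have "closed (G n)" for n
    unfolding G_def by (intro closed_Collect_le continuous_intros)
  then have "analytic_in euclidean (G n)" for n
    by (rule analytic_closed)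
  moreover have "U = (\<Union>n. G n)"
  proof (intro antisym subsetI)
    fix y assume "y \<in> U"
    moreover have "closed (- U)" "- U \<noteq> {}"
      using assms False by auto
    ultimately have "0 < infdist y (- U)"
      by (intro infdist_pos_not_in_closed) auto
    then obtain n where "inverse (Suc n) < infdist y (- U)"
      using reals_Archimedean by blast
    then have "y \<in> G n"
      by (simp add: G_def inverse_eq_divide)
    then show "y \<in> (\<Union>n. G n)"
      by blast
  next
    fix y assume "y \<in> (\<Union>n. G n)"
    then obtain n where n: "1 / Suc n \<le> infdist y (- U)"
      by (auto simp: G_def)
    have "(0::real) < 1 / Suc n"
      by simp
    with n have "infdist y (- U) \<noteq> 0"
      by linarith
    then show "y \<in> U"
      using infdist_zero[of y "- U"] by blast
  qed
  ultimately show ?thesis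
    using analytic_UN by metis
qed (use analytic_closed[of UNIV] in simp)

lemma analytic_borel:
  fixes S :: "'a::polish_space set"
  assumes "S \<in> sets borel"
  shows "analytic_in euclidean S"
proof -
  have "S \<in> sigma_sets UNIV {S. open S}"
    using assms by (simp add: sets_borel)
  then have "analytic_in euclidean S \<and> analytic_in euclidean (- S)"
  proof (induction rule: sigma_sets.induct)
    case (Basic a)
    then have "open a"
      by simp
    then show ?case
      using analytic_open analytic_closed[OF closed_Compl] by blast
  next
    case Empty
    then show ?case
      using analytic_closed[of UNIV] by (simp add: analytic_in_euclidean_iff)
  next
    case (Compl a)
    then show ?case
      by (simp add: Compl_eq_Diff_UNIV[symmetric])
  next
    case (Union a)
    then show ?case
      by (simp add: analytic_UN analytic_INT)
  qed
  then show ?thesis ..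
qed

section \<open>The Cantor cube and Borel functions\<close>

lemma topspace_cantor_top [simp]: "topspace cantor_top = UNIV"
proof -
  have "A \<in> {B. undefined \<in> B} \<union> {B. undefined \<notin> B}" for A :: "'a set"
    by blast
  then show ?thesis
    unfolding cantor_top_def topology_generated_by_topspace by blast
qed

lemma openin_cantor_top_mem: "openin cantor_top {A. a \<in> A}"
  unfolding cantor_top_def by (rule topology_generated_by_Basis) blast

lemma openin_cantor_top_not_mem: "openin cantor_top {A. a \<notin> A}"
  unfolding cantor_top_def by (rule topology_generated_by_Basis) blast

lemma closedin_cantor_top_Pow: "closedin cantor_top (Pow V)"
proof -
  have "openin cantor_top (\<Union>a\<in>-V. {A. a \<in> A})"
    by (intro openin_Union) (auto intro: openin_cantor_top_mem)
  moreover have "topspace cantor_top - Pow V = (\<Union>a\<in>-V. {A. a \<in> A})"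
    by auto
  ultimately show ?thesis
    by (simp add: closedin_def)
qed

lemma continuous_map_into_cantor_top:
  assumes "\<And>a. openin X {x \<in> topspace X. a \<in> g x}"
    and "\<And>a. openin X {x \<in> topspace X. a \<notin> g x}"
  shows "continuous_map X cantor_top g"
  unfolding cantor_top_def
proof (rule continuous_on_generated_topo)
  show "g ` topspace X \<subseteq> \<Union>({{A. a \<in> A} | a. True} \<union> {{A. a \<notin> A} | a. True})"
    using topspace_cantor_top unfolding cantor_top_def topology_generated_by_topspace by blast
qed (use assms in \<open>auto simp: vimage_def Int_def conj_commute\<close>)

lemma continuous_map_cantor_top_Diff: "continuous_map cantor_top cantor_top (\<lambda>A. A - K)"
proof (rule continuous_map_into_cantor_top)
  fix a
  show "openin cantor_top {A \<in> topspace cantor_top. a \<in> A - K}"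
    using openin_cantor_top_mem[of a] by (cases "a \<in> K") simp_all
  show "openin cantor_top {A \<in> topspace cantor_top. a \<notin> A - K}"
    using openin_cantor_top_not_mem[of a] openin_topspace[of cantor_top] by (cases "a \<in> K") simp_all
qed

lemma space_borel_on: "space (borel_on X) = topspace X"
  by (simp add: borel_on_def space_measure_of_conv)

lemma sets_borel_on: "sets (borel_on X) = sigma_sets (topspace X) {U. openin X U}"
  unfolding borel_on_def using openin_subset by (intro sets_measure_of) blast

lemma borel_on_euclidean: "borel_on euclidean = borel"
  by (simp add: borel_on_def borel_def)

lemma closedin_sets_borel_on:
  assumes "closedin X C"
  shows "C \<in> sets (borel_on X)"
proof -
  have "topspace X - C \<in> sets (borel_on X)"
    using assms by (simp add: sets_borel_on closedin_def sigma_sets.Basic)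
  then have "topspace X - (topspace X - C) \<in> sets (borel_on X)"
    by (simp add: sets_borel_on sigma_sets.Compl)
  then show ?thesis
    using closedin_subset[OF assms] by (simp add: Diff_Diff_Int inf_absorb2)
qed

lemma measurable_borel_on_continuous_map:
  assumes "continuous_map X Y g"
  shows "g \<in> borel_on X \<rightarrow>\<^sub>M borel_on Y"
proof (rule measurable_sigma_sets)
  show "sets (borel_on Y) = sigma_sets (topspace Y) {U. openin Y U}"
    by (rule sets_borel_on)
  show "{U. openin Y U} \<subseteq> Pow (topspace Y)"
    using openin_subset by blast
  show "g \<in> space (borel_on X) \<rightarrow> topspace Y"
    using continuous_map_funspace[OF assms] by (simp add: space_borel_on)
  fix U assume "U \<in> {U. openin Y U}"
  then have "openin X {x \<in> topspace X. g x \<in> U}"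
    using openin_continuous_map_preimage[OF assms] by blast
  then show "g -` U \<inter> space (borel_on X) \<in> sets (borel_on X)"
    by (simp add: sets_borel_on space_borel_on sigma_sets.Basic vimage_def Int_def conj_commute)
qed

section \<open>Limit sets\<close>

lemma continuous_map_Diff_into_family:
  assumes f: "continuous_map X infsets_top f" "f ` topspace X \<subseteq> \<F>"
    and Diff: "\<And>A. A \<in> \<F> \<Longrightarrow> A - K \<in> \<F>" and "finite K"
  shows "continuous_map X (subtopology infsets_top \<F>) (\<lambda>x. f x - K)"
proof -
  have "continuous_map X cantor_top f"
    using f(1) unfolding infsets_top_def continuous_map_in_subtopology by blast
  then have "continuous_map X cantor_top (\<lambda>x. f x - K)"
    using continuous_map_compose[OF _ continuous_map_cantor_top_Diff] unfolding o_def by blast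
  moreover have "infinite (f x - K)" "f x - K \<in> \<F>" if "x \<in> topspace X" for x
  proof -
    have "infinite (f x)"
      using continuous_map_image_subset_topspace[OF f(1)] that by (auto simp: infsets_top_def)
    then show "infinite (f x - K)"
      using \<open>finite K\<close> by simp
    show "f x - K \<in> \<F>"
      using f(2) Diff that by blast
  qed
  ultimately show ?thesis
    unfolding infsets_top_def subtopology_subtopology continuous_map_in_subtopology by blast
qed

lemma sets_borel_Collect_Diff_subset:
  fixes f :: "'z::topological_space \<Rightarrow> 'o set" and \<rho> :: "'o set \<Rightarrow> 'p set"
  assumes f: "continuous_map euclidean infsets_top f" "range f \<subseteq> \<F>"
    and Diff: "\<And>A. A \<in> \<F> \<Longrightarrow> A - K \<in> \<F>" and "finite K"
    and \<rho>: "\<rho> \<in> borel_on (subtopology infsets_top \<F>) \<rightarrow>\<^sub>M borel_on infsets_top"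
  shows "{z. \<rho> (f z - K) \<subseteq> V} \<in> sets borel"
proof -
  have "continuous_map euclidean (subtopology infsets_top \<F>) (\<lambda>z. f z - K)"
    using f Diff \<open>finite K\<close> by (intro continuous_map_Diff_into_family) auto
  then have "(\<lambda>z. f z - K) \<in> borel \<rightarrow>\<^sub>M borel_on (subtopology infsets_top \<F>)"
    using measurable_borel_on_continuous_map borel_on_euclidean by metis
  then have m: "(\<lambda>z. \<rho> (f z - K)) \<in> borel \<rightarrow>\<^sub>M borel_on infsets_top"
    using measurable_comp[OF _ \<rho>] unfolding o_def by blast
  have "closedin infsets_top ({A. infinite A} \<inter> Pow V)"
    unfolding infsets_top_def by (intro closedin_subtopology_Int_closed closedin_cantor_top_Pow)
  then have "(\<lambda>z. \<rho> (f z - K)) -` ({A. infinite A} \<inter> Pow V) \<inter> space borel \<in> sets borel"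
    by (rule measurable_sets[OF m closedin_sets_borel_on])
  moreover have "infinite (\<rho> (f z - K))" for z
    using measurable_space[OF m] by (simp add: space_borel_on infsets_top_def)
  ultimately show ?thesis
    by (simp add: vimage_def Int_def)
qed

lemma Lambda_lim_eq_fst_image:
  fixes x :: "'p \<Rightarrow> 'x::topological_space"
  assumes \<B>: "topological_basis \<B>" and "range f = \<F>"
  shows "Lambda_lim \<F> \<rho> x =
    fst ` {(\<eta>, z). \<forall>b\<in>\<B>. \<eta> \<in> b \<longrightarrow> (\<exists>K. finite K \<and> \<rho> (f z - K) \<subseteq> x -` b)}"
    (is "_ = fst ` ?S")
proof (intro antisym subsetI)
  fix \<eta> assume "\<eta> \<in> Lambda_lim \<F> \<rho> x"
  then obtain F where "F \<in> \<F>"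
    and F: "\<And>U. open U \<Longrightarrow> \<eta> \<in> U \<Longrightarrow> \<exists>K. finite K \<and> (\<forall>s\<in>\<rho> (F - K). x s \<in> U)"
    unfolding Lambda_lim_def by blast
  then obtain z where "f z = F"
    using \<open>range f = \<F>\<close> by blast
  have "(\<eta>, z) \<in> ?S"
    unfolding mem_Collect_eq prod.case
  proof (intro ballI impI)
    fix b assume "b \<in> \<B>" "\<eta> \<in> b"
    then obtain K where "finite K" "\<forall>s\<in>\<rho> (F - K). x s \<in> b"
      using F topological_basis_open[OF \<B>] by blast
    then show "\<exists>K. finite K \<and> \<rho> (f z - K) \<subseteq> x -` b"
      using \<open>f z = F\<close> by blast
  qed
  then show "\<eta> \<in> fst ` ?S"
    by (rule image_eqI[rotated]) simp
next
  fix \<eta> assume "\<eta> \<in> fst ` ?S"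
  then obtain z where z: "\<forall>b\<in>\<B>. \<eta> \<in> b \<longrightarrow> (\<exists>K. finite K \<and> \<rho> (f z - K) \<subseteq> x -` b)"
    by auto
  have "\<exists>K. finite K \<and> (\<forall>s\<in>\<rho> (f z - K). x s \<in> U)" if U: "open U" "\<eta> \<in> U" for U
  proof -
    obtain b where "b \<in> \<B>" "\<eta> \<in> b" "b \<subseteq> U"
      using topological_basisE[OF \<B> U] by blast
    then obtain K where "finite K" "\<rho> (f z - K) \<subseteq> x -` b"
      using z by blast
    then show ?thesis
      using \<open>b \<subseteq> U\<close> by auto
  qed
  moreover have "f z \<in> \<F>"
    using \<open>range f = \<F>\<close> by blast
  ultimately show "\<eta> \<in> Lambda_lim \<F> \<rho> x"
    unfolding Lambda_lim_def by blast
qed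

lemma sets_borel_basis_condition:
  fixes \<B> :: "'a::second_countable_topology set set"
    and W :: "'a set \<Rightarrow> 'k \<Rightarrow> 'b::second_countable_topology set"
  assumes "countable \<B>" "\<And>b. b \<in> \<B> \<Longrightarrow> open b" "countable \<K>"
    and "\<And>b K. b \<in> \<B> \<Longrightarrow> K \<in> \<K> \<Longrightarrow> W b K \<in> sets borel"
  shows "{(\<eta>, z). \<forall>b\<in>\<B>. \<eta> \<in> b \<longrightarrow> (\<exists>K\<in>\<K>. z \<in> W b K)} \<in> sets borel"
proof -
  have "(- b) \<times> UNIV \<union> (\<Union>K\<in>\<K>. UNIV \<times> W b K) \<in> sets (borel \<Otimes>\<^sub>M borel)" if "b \<in> \<B>" for b
  proof (rule sets.Un)
    show "(- b) \<times> UNIV \<in> sets (borel \<Otimes>\<^sub>M borel)"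
      using assms(2)[OF that] by (intro pair_measureI borel_closed) auto
    show "(\<Union>K\<in>\<K>. UNIV \<times> W b K) \<in> sets (borel \<Otimes>\<^sub>M borel)"
      using assms(3,4) that by (intro sets.countable_UN'' pair_measureI) auto
  qed
  then have "(\<Inter>b\<in>\<B>. (- b) \<times> UNIV \<union> (\<Union>K\<in>\<K>. UNIV \<times> W b K)) \<in> sets (borel \<Otimes>\<^sub>M borel)"
    using \<open>countable \<B>\<close> pair_measureI[of UNIV borel UNIV borel] by (intro sets.countable_INT'') auto
  moreover have "{(\<eta>, z). \<forall>b\<in>\<B>. \<eta> \<in> b \<longrightarrow> (\<exists>K\<in>\<K>. z \<in> W b K)} =
      (\<Inter>b\<in>\<B>. (- b) \<times> UNIV \<union> (\<Union>K\<in>\<K>. UNIV \<times> W b K))"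
    by auto
  ultimately show ?thesis
    by (simp only: borel_prod)
qed

lemma analytic_Lambda_lim:
  fixes \<F> :: "'o::countable set set" and \<rho> :: "'o set \<Rightarrow> 'p set" and x :: "'p \<Rightarrow> 'x::polish_space"
  assumes Diff: "\<forall>A\<in>\<F>. \<forall>K. finite K \<longrightarrow> A - K \<in> \<F>"
    and "analytic_in infsets_top \<F>"
    and \<rho>: "\<rho> \<in> borel_on (subtopology infsets_top \<F>) \<rightarrow>\<^sub>M borel_on infsets_top"
  shows "analytic_in euclidean (Lambda_lim \<F> \<rho> x)"
proof (cases "\<F> = {}")
  case False
  then obtain f :: "(nat \<Rightarrow> nat) \<Rightarrow> 'o set"
    where f: "continuous_map euclidean infsets_top f" "range f = \<F>"
    using \<open>analytic_in infsets_top \<F>\<close> unfolding analytic_in_def by blast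
  obtain \<B> :: "'x set set" where "countable \<B>" and \<B>: "topological_basis \<B>"
    using ex_countable_basis by blast
  define W where "W b K = {z. \<rho> (f z - K) \<subseteq> x -` b}" for b K
  define S where "S = {(\<eta>, z). \<forall>b\<in>\<B>. \<eta> \<in> b \<longrightarrow> (\<exists>K\<in>{K. finite K}. z \<in> W b K)}"
  have "S \<in> sets borel"
    unfolding S_def W_def using \<open>countable \<B>\<close> topological_basis_open[OF \<B>] countable_Collect_finite
    by (intro sets_borel_basis_condition sets_borel_Collect_Diff_subset[OF f(1) _ _ _ \<rho>])
      (use f Diff in auto)
  then have "analytic_in euclidean (fst ` S)"
    by (intro analytic_in_continuous_map_image[OF analytic_borel]) (simp_all add: continuous_on_fst)
  moreover have "fst ` S = Lambda_lim \<F> \<rho> x"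
    unfolding Lambda_lim_eq_fst_image[OF \<B> f(2)] S_def W_def by simp
  ultimately show ?thesis
    by simp
qed (simp add: Lambda_lim_def analytic_in_def)

theorem proposition4p1:
  fixes \<F> :: "'o::countable set set"
    and \<rho> :: "'o set \<Rightarrow> 'p::countable set"
  assumes "infinite (UNIV :: 'o set)" and "infinite (UNIV :: 'p set)"
    and "\<F> \<noteq> {}" and "\<forall>A\<in>\<F>. infinite A"
    and "\<forall>A\<in>\<F>. \<forall>K. finite K \<longrightarrow> A - K \<in> \<F>"
    and "\<forall>F\<in>\<F>. infinite (\<rho> F)"
    and "partition_regular \<F> \<rho>"
    and "analytic_in infsets_top \<F>"
    and "\<rho> \<in> borel_on (subtopology infsets_top \<F>) \<rightarrow>\<^sub>M borel_on infsets_top"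
  shows "\<forall>A \<in> (L_fam \<F> \<rho> :: 'x::polish_space set set). analytic_in euclidean A"
  using analytic_Lambda_lim[OF assms(5,8,9)] by (auto simp: L_fam_def analytic_in_def)

end
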